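(* Consider the differential equation $\dot z = iz + a(z\overline z)^n z^{k+1}$, $z\in\mathbb{C}$, with $a\in\mathbb{C}$, $a\neq0$, and $n,k$ nonnegative integers. (i) If $n=0$, the origin is an isochronous center. (ii) If $k=0$ (and $n\ge 1$), the origin is a center if and only if $\operatorname{Re}(a)=0$. Moreover, when $a=\alpha i$ with $\alpha\in\mathbb{R}\setminus\{0\}$, the function $V(z,\overline z)=z\overline z$ is a first integral, and the period function of the origin, parametrized by $u=z\overline z$, is \[ T(u)=\frac{2\pi}{1+\alpha u^n}. \] In particular, when $\alpha>0$ the origin is a global center whose period function is decreasing and tends to $0$ at infinity; when $\alpha<0$ the period annulus of the origin is $\{z\overline z<(-1/\alpha)^{1/n}\}$, its boundary $\{z\overline z=(-1/\alpha)^{1/n}\}$ consists of equilibria, and the period function is increasing and tends to $+\infty$ at this boundary.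
   Context: The period function of a center assigns to each periodic orbit in its period annulus (the largest punctured neighborhood of the center foliated by periodic orbits) its minimal period. An isochronous center is one whose period function is constant. *)

theory Defs
  imports "HOL-Analysis.Analysis"
begin

definition the_field :: "complex \<Rightarrow> nat \<Rightarrow> nat \<Rightarrow> complex \<Rightarrow> complex" where
  "the_field a n k z = \<i> * z + a * (z * cnj z) ^ n * z ^ (k + 1)"

definition is_solution :: "(complex \<Rightarrow> complex) \<Rightarrow> (real \<Rightarrow> complex) \<Rightarrow> bool" where
  "is_solution F x \<longleftrightarrow> (\<forall>t. (x has_vector_derivative F (x t)) (at t))"

definition is_period :: "(complex \<Rightarrow> complex) \<Rightarrow> complex \<Rightarrow> real \<Rightarrow> bool" where
  "is_period F p T \<longleftrightarrow> T > 0 \<and>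
     (\<exists>x. is_solution F x \<and> x 0 = p \<and> (\<forall>t. x (t + T) = x t))"

definition periodic_point :: "(complex \<Rightarrow> complex) \<Rightarrow> complex \<Rightarrow> bool" where
  "periodic_point F p \<longleftrightarrow> F p \<noteq> 0 \<and> (\<exists>T. is_period F p T)"

definition min_period :: "(complex \<Rightarrow> complex) \<Rightarrow> complex \<Rightarrow> real" where
  "min_period F p = Inf {T. is_period F p T}"

definition center :: "(complex \<Rightarrow> complex) \<Rightarrow> complex \<Rightarrow> bool" where
  "center F z0 \<longleftrightarrow> F z0 = 0 \<and>
     (\<exists>r>0. \<forall>p \<in> ball z0 r - {z0}. periodic_point F p)"

definition period_annulus :: "(complex \<Rightarrow> complex) \<Rightarrow> complex \<Rightarrow> complex set" where
  "period_annulus F z0 =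
     \<Union>{U. open U \<and> connected U \<and> z0 \<in> U \<and> (\<forall>p \<in> U - {z0}. periodic_point F p)} - {z0}"

definition isochronous_center :: "(complex \<Rightarrow> complex) \<Rightarrow> complex \<Rightarrow> bool" where
  "isochronous_center F z0 \<longleftrightarrow> center F z0 \<and>
     (\<exists>c. \<forall>p \<in> period_annulus F z0. min_period F p = c)"

definition global_center :: "(complex \<Rightarrow> complex) \<Rightarrow> complex \<Rightarrow> bool" where
  "global_center F z0 \<longleftrightarrow> center F z0 \<and> period_annulus F z0 = UNIV - {z0}"

definition first_integral :: "(complex \<Rightarrow> complex) \<Rightarrow> (complex \<Rightarrow> 'a) \<Rightarrow> bool" where
  "first_integral F V \<longleftrightarrow>
     (\<forall>x I. is_interval I \<and> (\<forall>t\<in>I. (x has_vector_derivative F (x t)) (at t within I))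
        \<longrightarrow> (\<exists>c. \<forall>t\<in>I. V (x t) = c))"

end

theory Submission
  imports Defs
begin

text \<open>
  For \<open>k = 0\<close> and \<open>a = \<alpha>i\<close> the field is the rotation field \<open>i \<omega>(|z|) z\<close> with angular speed
  \<open>\<omega>(r) = 1 + \<alpha> r\<^bsup>2n\<^esup>\<close>: \<open>|z|\<close> is conserved and every circle on which \<open>\<omega> > 0\<close> is an orbit of
  period \<open>2\<pi>/\<omega>\<close>, so all claims reduce to properties of \<open>\<omega>\<close>. For \<open>Re a \<noteq> 0\<close>, \<open>|z|\<^sup>2\<close> is strictly
  monotone along orbits, which excludes periodic orbits.

  For \<open>n = 0\<close> the equation is of Bernoulli type: \<open>w = z\<^bsup>-k\<^esup>\<close> solves a linear equation, so
  \<open>z(t)\<^sup>k (c + ia e\<^bsup>ikt\<^esup>) = e\<^bsup>ikt\<^esup>\<close> for a constant \<open>c\<close> determined by \<open>z(0)\<close>. A global solution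
  forces \<open>|c| \<noteq> |a|\<close>, and by connectedness \<open>|c| > |a|\<close> on the whole period annulus. There
  \<open>z(t) = e\<^bsup>it\<^esup> (c + ia e\<^bsup>ikt\<^esup>)\<^bsup>-1/k\<^esup>\<close> is a well-defined \<open>2\<pi>\<close>-periodic solution, the only one
  (two solutions differ by a continuous factor that is a \<open>k\<close>-th root of unity), and it returns
  to its starting point only at multiples of \<open>2\<pi>\<close>; hence every period is \<open>2\<pi>\<close>.
\<close>

section \<open>Periods and period annuli\<close>

lemma min_period_eqI:
  assumes "is_period F p T" and "\<And>T'. is_period F p T' \<Longrightarrow> T \<le> T'"
  shows "min_period F p = T"
  unfolding min_period_def by (rule cInf_eq_minimum) (use assms in auto)

lemma solution_continuous: "is_solution F x \<Longrightarrow> continuous_on UNIV x"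
  unfolding is_solution_def
  by (meson continuous_at_imp_continuous_on has_vector_derivative_continuous)

lemma period_annulus_neq_center: "p \<in> period_annulus F z0 \<Longrightarrow> p \<noteq> z0"
  unfolding period_annulus_def by blast

lemma punctured_subset_period_annulus:
  assumes "open S" "connected S" "z0 \<in> S" "\<And>p. p \<in> S - {z0} \<Longrightarrow> periodic_point F p"
  shows "S - {z0} \<subseteq> period_annulus F z0"
  unfolding period_annulus_def using assms by blast

lemma period_annulus_positive:
  fixes \<phi> :: "complex \<Rightarrow> real"
  assumes cont: "continuous_on UNIV \<phi>" and pos: "\<phi> z0 > 0"
    and nonzero: "\<And>q. q \<noteq> z0 \<Longrightarrow> periodic_point F q \<Longrightarrow> \<phi> q \<noteq> 0"
    and p: "p \<in> period_annulus F z0"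
  shows "\<phi> p > 0"
proof (rule ccontr)
  assume "\<not> \<phi> p > 0"
  obtain U where U: "connected U" "z0 \<in> U" "p \<in> U" and per: "\<forall>q\<in>U - {z0}. periodic_point F q"
    using p unfolding period_annulus_def by blast
  have "connected (\<phi> ` U)"
    using connected_continuous_image[OF continuous_on_subset[OF cont subset_UNIV] U(1)] .
  then have "0 \<in> \<phi> ` U"
    using connectedD_interval[OF _ imageI[OF U(3)] imageI[OF U(2)], of \<phi> 0] \<open>\<not> \<phi> p > 0\<close> pos by simp
  then obtain q where "q \<in> U" "\<phi> q = 0" by auto
  moreover from this have "q \<noteq> z0" using pos by auto
  ultimately show False using nonzero per by blast
qed

lemma has_vector_derivative_exp_scaled:
  "((\<lambda>t. exp (c * complex_of_real t)) has_vector_derivative c * exp (c * complex_of_real t)) (at t within S)"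
  by (rule has_vector_derivative_real_field) (auto intro!: derivative_eq_intros)

section \<open>Rotation fields\<close>

definition rotation_field :: "(real \<Rightarrow> real) \<Rightarrow> complex \<Rightarrow> complex" where
  "rotation_field \<omega> z = \<i> * of_real (\<omega> (cmod z)) * z"

lemma first_integral_rotation_field: "first_integral (rotation_field \<omega>) (\<lambda>z. z * cnj z)"
  unfolding first_integral_def
proof (intro allI impI)
  fix x :: "real \<Rightarrow> complex" and I :: "real set"
  assume I: "is_interval I \<and> (\<forall>t\<in>I. (x has_vector_derivative rotation_field \<omega> (x t)) (at t within I))"
  have "((\<lambda>t. x t * cnj (x t)) has_derivative (\<lambda>h. 0)) (at t within I)" if "t \<in> I" for t
  proof -
    define v where "v = rotation_field \<omega> (x t)"
    have "((\<lambda>t. x t * cnj (x t)) has_vector_derivative (x t * cnj v + v * cnj (x t))) (at t within I)"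
      using I that unfolding v_def by (intro derivative_intros) auto
    moreover have "x t * cnj v + v * cnj (x t) = 0"
      unfolding v_def rotation_field_def by (simp add: algebra_simps)
    ultimately show ?thesis by (simp add: has_vector_derivative_def)
  qed
  then show "\<exists>c. \<forall>t\<in>I. x t * cnj (x t) = c"
    using has_derivative_zero_constant[of I] I is_interval_convex by blast
qed

lemma rotation_field_solution:
  assumes x: "is_solution (rotation_field \<omega>) x"
  shows "x t = x 0 * exp (\<i> * of_real (\<omega> (cmod (x 0)) * t))"
proof -
  obtain c where "\<forall>s. x s * cnj (x s) = c"
    using first_integral_rotation_field[of \<omega>] x
    unfolding first_integral_def is_solution_def by (metis is_interval_univ UNIV_I)
  then have "complex_of_real (cmod (x s) ^ 2) = complex_of_real (cmod (x 0) ^ 2)" for s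
    by (simp only: complex_norm_square)
  then have norm_const: "cmod (x s) = cmod (x 0)" for s
    by (metis of_real_eq_iff norm_ge_zero power2_eq_iff_nonneg)
  define w where "w = \<omega> (cmod (x 0))"
  define E where "E s = x s * exp (- \<i> * of_real w * of_real s)" for s
  have "(E has_derivative (\<lambda>h. 0)) (at s within UNIV)" for s
  proof -
    have "(x has_vector_derivative \<i> * of_real w * x s) (at s)"
      using x norm_const[of s] unfolding is_solution_def rotation_field_def w_def by metis
    then have "(E has_vector_derivative x s * (- \<i> * of_real w * exp (- \<i> * of_real w * of_real s))
        + \<i> * of_real w * x s * exp (- \<i> * of_real w * of_real s)) (at s)"
      unfolding E_def by (intro has_vector_derivative_mult has_vector_derivative_exp_scaled)
    then show ?thesis by (simp add: has_vector_derivative_def algebra_simps)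
  qed
  then have "E t = E 0"
    using has_derivative_zero_constant[of UNIV E] by (metis convex_UNIV UNIV_I)
  then show ?thesis by (simp add: E_def w_def exp_minus field_simps)
qed

lemma rotation_field_is_period:
  assumes "\<omega> (cmod p) \<noteq> 0"
  shows "is_period (rotation_field \<omega>) p (2 * pi / \<bar>\<omega> (cmod p)\<bar>)"
proof -
  define w where "w = \<omega> (cmod p)"
  define X where "X t = p * exp (\<i> * of_real (w * t))" for t
  have "is_solution (rotation_field \<omega>) X"
    unfolding is_solution_def
  proof
    fix t
    have "X = (\<lambda>t. p * exp (\<i> * of_real w * of_real t))" by (simp add: X_def fun_eq_iff mult.assoc)
    then have "(X has_vector_derivative p * (\<i> * of_real w * exp (\<i> * of_real w * of_real t))) (at t)"
      by (simp only: has_vector_derivative_mult_right has_vector_derivative_exp_scaled)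
    then show "(X has_vector_derivative rotation_field \<omega> (X t)) (at t)"
      by (simp add: X_def rotation_field_def norm_mult w_def ac_simps)
  qed
  moreover have "X (t + 2 * pi / \<bar>w\<bar>) = X t" for t
  proof -
    have "w * (2 * pi / \<bar>w\<bar>) = 2 * pi \<or> w * (2 * pi / \<bar>w\<bar>) = - (2 * pi)"
      using assms by (auto simp: w_def abs_if)
    then have "exp (\<i> * of_real (w * (2 * pi / \<bar>w\<bar>))) = 1"
      by (metis cis_conv_exp cis_2pi cis_inverse inverse_1)
    then show ?thesis by (simp add: X_def distrib_left exp_add)
  qed
  ultimately show ?thesis
    unfolding is_period_def using assms by (auto simp: w_def X_def)
qed

lemma rotation_field_period_ge:
  assumes "p \<noteq> 0" "\<omega> (cmod p) \<noteq> 0" and "is_period (rotation_field \<omega>) p T"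
  shows "2 * pi / \<bar>\<omega> (cmod p)\<bar> \<le> T"
proof -
  define w where "w = \<omega> (cmod p)"
  obtain x where x: "is_solution (rotation_field \<omega>) x" "x 0 = p" and "x (0 + T) = x 0" "T > 0"
    using assms(3) unfolding is_period_def by blast
  then have "exp (\<i> * of_real (w * T)) = 1"
    using rotation_field_solution[OF x(1), of T] assms(1) by (simp add: w_def)
  then obtain m :: int where m: "w * T = of_int (2 * m) * pi" by (auto simp: exp_eq_1)
  then have "m \<noteq> 0" using \<open>T > 0\<close> assms(2) by (auto simp: w_def)
  then have "2 * pi \<le> \<bar>w * T\<bar>" unfolding m by (simp add: abs_mult)
  then show ?thesis using \<open>T > 0\<close> assms(2) by (simp add: w_def abs_mult field_simps)
qed

lemma rotation_field_periodic:
  assumes "p \<noteq> 0" and "\<omega> (cmod p) \<noteq> 0"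
  shows "periodic_point (rotation_field \<omega>) p"
    and "min_period (rotation_field \<omega>) p = 2 * pi / \<bar>\<omega> (cmod p)\<bar>"
proof -
  have "rotation_field \<omega> p \<noteq> 0" using assms by (simp add: rotation_field_def)
  then show "periodic_point (rotation_field \<omega>) p"
    unfolding periodic_point_def using rotation_field_is_period[of \<omega> p, OF assms(2)] by blast
  show "min_period (rotation_field \<omega>) p = 2 * pi / \<bar>\<omega> (cmod p)\<bar>"
    by (rule min_period_eqI[OF rotation_field_is_period[of \<omega> p, OF assms(2)]
          rotation_field_period_ge[of p \<omega>, OF assms]])
qed

lemma center_rotation_field:
  assumes "isCont \<omega> 0" and "\<omega> 0 \<noteq> 0"
  shows "center (rotation_field \<omega>) 0"
proof -
  obtain r where "r > 0" and r: "\<And>s. \<bar>s\<bar> < r \<Longrightarrow> \<omega> s \<noteq> 0"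
    using continuous_at_avoid[OF assms] by (auto simp: dist_real_def)
  have "periodic_point (rotation_field \<omega>) p" if "p \<in> ball 0 r - {0}" for p
    using that r[of "cmod p"] by (intro rotation_field_periodic(1)) auto
  moreover have "rotation_field \<omega> 0 = 0" by (simp add: rotation_field_def)
  ultimately show ?thesis
    unfolding center_def using \<open>r > 0\<close> by blast
qed

lemma rotation_field_subset_period_annulus:
  assumes "open S" "connected S" "0 \<in> S" and "\<And>p. p \<in> S - {0} \<Longrightarrow> \<omega> (cmod p) \<noteq> 0"
  shows "S - {0} \<subseteq> period_annulus (rotation_field \<omega>) 0"
  using assms by (intro punctured_subset_period_annulus rotation_field_periodic(1)) auto

lemma rotation_field_speed_pos_period_annulus:
  assumes "continuous_on UNIV \<omega>" "\<omega> 0 > 0" and "p \<in> period_annulus (rotation_field \<omega>) 0"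
  shows "\<omega> (cmod p) > 0"
proof (rule period_annulus_positive[where \<phi> = "\<lambda>z. \<omega> (cmod z)"])
  show "continuous_on UNIV (\<lambda>z. \<omega> (cmod z))"
    using assms(1) by (intro continuous_on_compose2[OF assms(1)] continuous_intros) auto
  show "\<omega> (cmod q) \<noteq> 0" if "periodic_point (rotation_field \<omega>) q" for q
    using that unfolding periodic_point_def rotation_field_def by auto
qed (use assms in auto)

lemma rotation_field_min_period_annulus:
  assumes "continuous_on UNIV \<omega>" "\<omega> 0 > 0" and "p \<in> period_annulus (rotation_field \<omega>) 0"
  shows "min_period (rotation_field \<omega>) p = 2 * pi / \<omega> (cmod p)"
proof -
  have "p \<noteq> 0" using period_annulus_neq_center[OF assms(3)] .
  moreover have "\<omega> (cmod p) > 0" using rotation_field_speed_pos_period_annulus[OF assms] .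
  ultimately show ?thesis by (simp add: rotation_field_periodic(2))
qed

lemma rotation_field_min_period_at_infinity:
  assumes "\<And>s. \<omega> s > 0" and "filterlim \<omega> at_top at_top"
  shows "(min_period (rotation_field \<omega>) \<longlongrightarrow> 0) at_infinity"
proof -
  have "filterlim (\<lambda>z. \<omega> (cmod z)) at_top at_infinity"
    by (rule filterlim_compose[OF assms(2) filterlim_norm_at_top])
  then have "((\<lambda>z. 2 * pi / \<omega> (cmod z)) \<longlongrightarrow> 0) at_infinity"
    by (intro tendsto_divide_0[OF tendsto_const] filterlim_at_top_imp_at_infinity)
  moreover have "\<forall>\<^sub>F z in at_infinity. 2 * pi / \<omega> (cmod z) = min_period (rotation_field \<omega>) z"
  proof (rule eventually_at_infinity[THEN iffD2, OF exI[of _ 1]], intro allI impI)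
    fix z :: complex assume "1 \<le> norm z"
    then have "z \<noteq> 0" by auto
    with assms(1)[of "cmod z"] show "2 * pi / \<omega> (cmod z) = min_period (rotation_field \<omega>) z"
      by (simp add: rotation_field_periodic(2))
  qed
  ultimately show ?thesis by (rule tendsto_cong[THEN iffD1, rotated])
qed

lemma rotation_field_min_period_at_equilibrium:
  assumes "continuous_on UNIV \<omega>" "\<omega> 0 > 0" and "\<omega> (cmod b) = 0"
  shows "filterlim (min_period (rotation_field \<omega>)) at_top
           (at b within period_annulus (rotation_field \<omega>) 0)"
proof -
  define A where "A = period_annulus (rotation_field \<omega>) 0"
  have "isCont \<omega> (cmod b)"
    using assms(1) by (simp add: continuous_on_eq_continuous_at)
  then have "((\<lambda>z. \<omega> (cmod z)) \<longlongrightarrow> 0) (at b within A)"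
    using isCont_tendsto_compose[OF _ tendsto_norm[OF tendsto_ident_at]] assms(3) by metis
  moreover have "\<forall>\<^sub>F z in at b within A. \<omega> (cmod z) > 0"
    unfolding eventually_at_filter A_def
    by (rule always_eventually) (use rotation_field_speed_pos_period_annulus[OF assms(1,2)] in blast)
  ultimately have "filterlim (\<lambda>z. 2 * pi * inverse (\<omega> (cmod z))) at_top (at b within A)"
    by (intro filterlim_tendsto_pos_mult_at_top[OF tendsto_const _ filterlim_inverse_at_top]) simp_all
  moreover have "\<forall>\<^sub>F z in at b within A. 2 * pi * inverse (\<omega> (cmod z)) = min_period (rotation_field \<omega>) z"
    unfolding eventually_at_filter A_def
    by (rule always_eventually) (simp add: rotation_field_min_period_annulus[OF assms(1,2)] divide_inverse)
  ultimately show ?thesis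
    unfolding A_def by (rule filterlim_cong[OF refl refl, THEN iffD1, rotated])
qed

lemma global_center_rotation_field:
  assumes "isCont \<omega> 0" and "\<And>r. r \<ge> 0 \<Longrightarrow> \<omega> r \<noteq> 0"
  shows "global_center (rotation_field \<omega>) 0"
proof -
  have "UNIV - {0} \<subseteq> period_annulus (rotation_field \<omega>) 0"
    using assms(2) by (intro rotation_field_subset_period_annulus) auto
  moreover have "period_annulus (rotation_field \<omega>) 0 \<subseteq> UNIV - {0}"
    using period_annulus_neq_center by blast
  ultimately show ?thesis
    unfolding global_center_def using center_rotation_field assms by blast
qed

lemma rotation_field_min_period_strict_antimono:
  assumes "continuous_on UNIV \<omega>" "\<omega> 0 > 0" and "strict_mono_on {0..} \<omega>"
  shows "\<forall>p \<in> period_annulus (rotation_field \<omega>) 0. \<forall>q \<in> period_annulus (rotation_field \<omega>) 0.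
           cmod p < cmod q \<longrightarrow> min_period (rotation_field \<omega>) q < min_period (rotation_field \<omega>) p"
proof (intro ballI impI)
  fix p q assume pq: "p \<in> period_annulus (rotation_field \<omega>) 0" "q \<in> period_annulus (rotation_field \<omega>) 0"
    and "cmod p < cmod q"
  then have "\<omega> (cmod p) < \<omega> (cmod q)" using assms(3) by (simp add: strict_mono_onD)
  then show "min_period (rotation_field \<omega>) q < min_period (rotation_field \<omega>) p"
    using rotation_field_speed_pos_period_annulus[OF assms(1,2) pq(1)]
    by (simp add: rotation_field_min_period_annulus[OF assms(1,2) pq(1)]
        rotation_field_min_period_annulus[OF assms(1,2) pq(2)] divide_strict_left_mono)
qed

lemma rotation_field_min_period_strict_mono:
  assumes "continuous_on UNIV \<omega>" "\<omega> 0 > 0" and "strict_antimono_on {0..} \<omega>"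
  shows "\<forall>p \<in> period_annulus (rotation_field \<omega>) 0. \<forall>q \<in> period_annulus (rotation_field \<omega>) 0.
           cmod p < cmod q \<longrightarrow> min_period (rotation_field \<omega>) p < min_period (rotation_field \<omega>) q"
proof (intro ballI impI)
  fix p q assume pq: "p \<in> period_annulus (rotation_field \<omega>) 0" "q \<in> period_annulus (rotation_field \<omega>) 0"
    and "cmod p < cmod q"
  then have "\<omega> (cmod q) < \<omega> (cmod p)" using monotone_onD[OF assms(3), of "cmod p" "cmod q"] by simp
  then show "min_period (rotation_field \<omega>) p < min_period (rotation_field \<omega>) q"
    using rotation_field_speed_pos_period_annulus[OF assms(1,2) pq(2)]
    by (simp add: rotation_field_min_period_annulus[OF assms(1,2) pq(1)]
        rotation_field_min_period_annulus[OF assms(1,2) pq(2)] divide_strict_left_mono)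
qed

section \<open>The case \<open>k = 0\<close>\<close>

definition angular_speed :: "real \<Rightarrow> nat \<Rightarrow> real \<Rightarrow> real" where
  "angular_speed \<alpha> n r = 1 + \<alpha> * (r\<^sup>2) ^ n"

lemma the_field_imaginary_eq_rotation_field:
  "the_field (of_real \<alpha> * \<i>) n 0 = rotation_field (angular_speed \<alpha> n)"
  by (simp add: fun_eq_iff the_field_def rotation_field_def angular_speed_def
      complex_norm_square[symmetric] algebra_simps)

lemma continuous_on_angular_speed: "continuous_on UNIV (angular_speed \<alpha> n)"
  unfolding angular_speed_def by (intro continuous_intros)

lemma angular_speed_zero: "n \<ge> 1 \<Longrightarrow> angular_speed \<alpha> n 0 = 1"
  by (simp add: angular_speed_def)

lemma angular_speed_pos: "\<alpha> > 0 \<Longrightarrow> angular_speed \<alpha> n r > 0"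
  by (simp add: angular_speed_def add_pos_nonneg)

lemma angular_speed_at_top:
  assumes "\<alpha> > 0" "n \<ge> 1"
  shows "filterlim (angular_speed \<alpha> n) at_top at_top"
proof -
  have "filterlim (\<lambda>r::real. (r\<^sup>2) ^ n) at_top at_top"
    using assms(2) by (intro filterlim_pow_at_top filterlim_ident) auto
  then show ?thesis
    unfolding angular_speed_def
    by (intro filterlim_tendsto_add_at_top[OF tendsto_const]
        filterlim_tendsto_pos_mult_at_top[OF tendsto_const assms(1)])
qed

lemma angular_speed_neg_sign:
  assumes "\<alpha> < 0" "n \<ge> 1"
  shows "angular_speed \<alpha> n r > 0 \<longleftrightarrow> r\<^sup>2 < (-1/\<alpha>) powr (1/n)"
    and "angular_speed \<alpha> n r = 0 \<longleftrightarrow> r\<^sup>2 = (-1/\<alpha>) powr (1/n)"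
proof -
  define R where "R = (-1/\<alpha>) powr (1/n)"
  have "R ^ n = ((-1/\<alpha>) powr (1/n)) powr n"
    using assms by (simp add: R_def powr_realpow)
  then have Rn: "R ^ n = -1/\<alpha>"
    using assms by (simp add: powr_powr)
  have "R > 0" using assms by (simp add: R_def)
  have speed: "angular_speed \<alpha> n r = - \<alpha> * (R ^ n - (r\<^sup>2) ^ n)"
    using assms(1) by (simp add: angular_speed_def Rn field_simps)
  have "R ^ n \<le> (r\<^sup>2) ^ n \<longleftrightarrow> R \<le> r\<^sup>2"
    using \<open>R > 0\<close> assms(2) by (intro power_mono_iff) auto
  then show "angular_speed \<alpha> n r > 0 \<longleftrightarrow> r\<^sup>2 < R"
    unfolding speed using assms(1) by (auto simp: mult_less_0_iff)
  show "angular_speed \<alpha> n r = 0 \<longleftrightarrow> r\<^sup>2 = R"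
    unfolding speed using assms \<open>R > 0\<close>
    by (auto simp: power_eq_iff_eq_base)
qed

lemma has_real_derivative_norm_square_k0:
  assumes "is_solution (the_field a n 0) x"
  shows "((\<lambda>t. cmod (x t) ^ 2) has_real_derivative 2 * Re a * (cmod (x t) ^ 2) ^ (n + 1)) (at t)"
proof -
  define v where "v = the_field a n 0 (x t)"
  define q where "q = cmod (x t) ^ 2"
  have "(x has_vector_derivative v) (at t)"
    using assms unfolding is_solution_def v_def by blast
  then have "((\<lambda>t. x t * cnj (x t)) has_vector_derivative x t * cnj v + v * cnj (x t)) (at t)"
    by (intro derivative_intros)
  then have deriv: "((\<lambda>t. Re (x t * cnj (x t))) has_vector_derivative Re (x t * cnj v + v * cnj (x t))) (at t)"
    by (rule bounded_linear.has_vector_derivative[OF bounded_linear_Re])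
  have "v * cnj (x t) = \<i> * of_real q + a * of_real q ^ (n + 1)"
    unfolding v_def the_field_def q_def complex_norm_square by (simp add: algebra_simps)
  moreover have "x t * cnj v = cnj (v * cnj (x t))" by simp
  ultimately have "Re (x t * cnj v + v * cnj (x t)) = 2 * Re a * q ^ (n + 1)"
    by (simp del: complex_cnj_mult)
  with deriv show ?thesis
    by (simp add: has_real_derivative_iff_has_vector_derivative q_def complex_norm_square[symmetric])
qed

text \<open>If \<open>Re a \<noteq> 0\<close>, \<open>|z|\<^sup>2\<close> is monotone along solutions and its derivative vanishes only
  at the origin; a closed orbit would force it through \<open>0\<close> by the mean value theorem.\<close>
lemma not_periodic_point_k0:
  assumes "Re a \<noteq> 0"
  shows "\<not> periodic_point (the_field a n 0) p"
proof
  assume "periodic_point (the_field a n 0) p"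
  then have "p \<noteq> 0"
    unfolding periodic_point_def the_field_def by auto
  obtain T x where x: "is_solution (the_field a n 0) x" "x 0 = p" "x T = p" and "T > 0"
    using \<open>periodic_point _ p\<close> unfolding periodic_point_def is_period_def by (metis add_0)
  define f where "f t = cmod (x t) ^ 2" for t
  have f': "DERIV f t :> 2 * Re a * f t ^ (n + 1)" for t
    unfolding f_def by (rule has_real_derivative_norm_square_k0[OF x(1)])
  have "f 0 > 0" and "f T = f 0"
    using x(2,3) \<open>p \<noteq> 0\<close> by (simp_all add: f_def)
  obtain \<xi> where \<xi>: "0 < \<xi>" "\<xi> < T" and "f T - f 0 = (T - 0) * (2 * Re a * f \<xi> ^ (n + 1))"
    using MVT2[OF \<open>T > 0\<close> f'] by blast
  then have "f \<xi> = 0"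
    using \<open>f T = f 0\<close> \<open>T > 0\<close> assms by auto
  show False
  proof (cases "Re a > 0")
    case True
    then have "f 0 \<le> f \<xi>"
      using \<xi> f' by (intro DERIV_nonneg_imp_nondecreasing[of 0 \<xi> f]) (auto intro!: exI simp: f_def)
    then show False using \<open>f 0 > 0\<close> \<open>f \<xi> = 0\<close> by simp
  next
    case False
    then have "f T \<le> f \<xi>"
      using \<xi> f' assms
      by (intro DERIV_nonpos_imp_nonincreasing[of \<xi> T f]) (auto intro!: exI simp: f_def mult_nonpos_nonneg)
    then show False using \<open>f 0 > 0\<close> \<open>f T = f 0\<close> \<open>f \<xi> = 0\<close> by simp
  qed
qed

lemma center_k0_iff:
  assumes "n \<ge> 1"
  shows "center (the_field a n 0) 0 \<longleftrightarrow> Re a = 0"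
proof
  assume "center (the_field a n 0) 0"
  then obtain r where "r > 0" and "\<forall>p \<in> ball 0 r - {0}. periodic_point (the_field a n 0) p"
    unfolding center_def by blast
  then have "periodic_point (the_field a n 0) (of_real (r / 2))" by simp
  then show "Re a = 0" using not_periodic_point_k0 by blast
next
  assume "Re a = 0"
  then have "a = of_real (Im a) * \<i>" by (simp add: complex_eq_iff)
  moreover have "center (rotation_field (angular_speed (Im a) n)) 0"
    using continuous_on_angular_speed angular_speed_zero[OF assms]
    by (intro center_rotation_field) (auto simp: continuous_on_eq_continuous_at)
  ultimately show "center (the_field a n 0) 0"
    by (metis the_field_imaginary_eq_rotation_field)
qed

lemma strict_mono_on_angular_speed:
  assumes "\<alpha> > 0" "n \<ge> 1"
  shows "strict_mono_on {0..} (angular_speed \<alpha> n)"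
  using assms by (intro monotone_onI) (simp add: angular_speed_def power_strict_mono)

lemma strict_antimono_on_angular_speed:
  assumes "\<alpha> < 0" "n \<ge> 1"
  shows "strict_antimono_on {0..} (angular_speed \<alpha> n)"
  using assms by (intro monotone_onI) (simp add: angular_speed_def power_strict_mono)

lemma period_annulus_angular_speed_neg:
  assumes "\<alpha> < 0" "n \<ge> 1"
  shows "period_annulus (rotation_field (angular_speed \<alpha> n)) 0
           = {z. 0 < cmod z ^ 2 \<and> cmod z ^ 2 < (-1/\<alpha>) powr (1/n)}"
    (is "?A = {z. 0 < cmod z ^ 2 \<and> cmod z ^ 2 < ?R}")
proof
  show "?A \<subseteq> {z. 0 < cmod z ^ 2 \<and> cmod z ^ 2 < ?R}"
    using period_annulus_neq_center angular_speed_neg_sign(1)[OF assms]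
      rotation_field_speed_pos_period_annulus[OF continuous_on_angular_speed]
      angular_speed_zero[OF assms(2)] by fastforce
  have ball: "cmod z < sqrt ?R \<longleftrightarrow> cmod z ^ 2 < ?R" for z
    by (metis abs_norm_cancel real_sqrt_abs real_sqrt_less_iff)
  have "ball 0 (sqrt ?R) - {0} \<subseteq> ?A"
  proof (rule rotation_field_subset_period_annulus)
    show "angular_speed \<alpha> n (cmod p) \<noteq> 0" if "p \<in> ball 0 (sqrt ?R) - {0}" for p
      using that angular_speed_neg_sign(1)[OF assms, of "cmod p"] ball[of p] by auto
  qed (use assms(1) in auto)
  moreover have "{z. 0 < cmod z ^ 2 \<and> cmod z ^ 2 < ?R} \<subseteq> ball 0 (sqrt ?R) - {0}"
    using ball by auto
  ultimately show "{z. 0 < cmod z ^ 2 \<and> cmod z ^ 2 < ?R} \<subseteq> ?A" by blast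
qed

lemma min_period_angular_speed:
  assumes "n \<ge> 1" and "p \<in> period_annulus (rotation_field (angular_speed \<alpha> n)) 0"
  shows "min_period (rotation_field (angular_speed \<alpha> n)) p = 2 * pi / (1 + \<alpha> * (cmod p ^ 2) ^ n)"
proof -
  have "angular_speed \<alpha> n 0 > 0" using angular_speed_zero[OF assms(1)] by simp
  from rotation_field_min_period_annulus[OF continuous_on_angular_speed this assms(2)]
  show ?thesis by (simp add: angular_speed_def)
qed

lemma period_function_angular_speed_pos:
  assumes "\<alpha> > 0" "n \<ge> 1"
  defines "F \<equiv> rotation_field (angular_speed \<alpha> n)"
  shows "global_center F 0
    \<and> (\<forall>p \<in> period_annulus F 0. \<forall>q \<in> period_annulus F 0. cmod p < cmod q \<longrightarrow> min_period F q < min_period F p)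
    \<and> (min_period F \<longlongrightarrow> 0) at_infinity"
proof -
  have pos: "angular_speed \<alpha> n r > 0" for r using assms(1) by (rule angular_speed_pos)
  have "global_center F 0"
    unfolding F_def using continuous_on_angular_speed pos
    by (intro global_center_rotation_field) (auto simp: continuous_on_eq_continuous_at less_imp_neq[symmetric])
  moreover have "\<forall>p \<in> period_annulus F 0. \<forall>q \<in> period_annulus F 0. cmod p < cmod q \<longrightarrow> min_period F q < min_period F p"
    unfolding F_def using pos assms(1,2)
    by (intro rotation_field_min_period_strict_antimono continuous_on_angular_speed strict_mono_on_angular_speed)
  moreover have "(min_period F \<longlongrightarrow> 0) at_infinity"
    unfolding F_def using pos assms(1,2)
    by (intro rotation_field_min_period_at_infinity angular_speed_at_top)
  ultimately show ?thesis by blast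
qed

lemma period_function_angular_speed_neg:
  assumes "\<alpha> < 0" "n \<ge> 1"
  defines "F \<equiv> rotation_field (angular_speed \<alpha> n)" and "R \<equiv> (-1/\<alpha>) powr (1/n)"
  shows "period_annulus F 0 = {z. 0 < cmod z ^ 2 \<and> cmod z ^ 2 < R}
    \<and> (\<forall>z. cmod z ^ 2 = R \<longrightarrow> F z = 0)
    \<and> (\<forall>p \<in> period_annulus F 0. \<forall>q \<in> period_annulus F 0. cmod p < cmod q \<longrightarrow> min_period F p < min_period F q)
    \<and> (\<forall>b. cmod b ^ 2 = R \<longrightarrow> filterlim (min_period F) at_top (at b within period_annulus F 0))"
proof -
  have equilibria: "angular_speed \<alpha> n (cmod z) = 0 \<longleftrightarrow> cmod z ^ 2 = R" for z
    unfolding R_def by (rule angular_speed_neg_sign(2)[OF assms(1,2)])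
  have speed0: "angular_speed \<alpha> n 0 > 0" using angular_speed_zero[OF assms(2)] by simp
  show ?thesis
    unfolding F_def R_def
    using period_annulus_angular_speed_neg[OF assms(1,2)] equilibria[unfolded R_def]
      rotation_field_min_period_strict_mono[OF continuous_on_angular_speed speed0
        strict_antimono_on_angular_speed[OF assms(1,2)]]
      rotation_field_min_period_at_equilibrium[OF continuous_on_angular_speed speed0]
    by (auto simp: rotation_field_def)
qed

section \<open>The case \<open>n = 0\<close>\<close>

lemma homogeneous_linear_ode_zero:
  fixes y g :: "real \<Rightarrow> complex"
  assumes "continuous_on UNIV g"
    and y': "\<And>t. (y has_vector_derivative g t * y t) (at t)" and "y 0 = 0"
  shows "y t = 0"
proof -
  define I where "I = {-\<bar>t\<bar>..\<bar>t\<bar>}"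
  obtain G where G': "\<And>s. s \<in> I \<Longrightarrow> (G has_vector_derivative g s) (at s within I)"
    using antiderivative_continuous[OF continuous_on_subset[OF assms(1) subset_UNIV]]
    unfolding I_def by blast
  define E where "E s = y s * exp (- G s)" for s
  have "(E has_vector_derivative 0) (at s within I)" if "s \<in> I" for s
  proof -
    have "((\<lambda>s. exp (- G s)) has_vector_derivative - g s * exp (- G s)) (at s within I)"
      using field_vector_diff_chain_within[OF G'[OF that, THEN has_vector_derivative_minus], of exp]
      by (auto simp: o_def intro: DERIV_exp[THEN has_field_derivative_at_within])
    from has_vector_derivative_mult[OF has_vector_derivative_at_within[OF y'] this]
    show ?thesis unfolding E_def by (simp add: algebra_simps)
  qed
  then obtain c where "\<forall>s\<in>I. E s = c"
    using has_derivative_zero_constant[of I E] by (auto simp: I_def has_vector_derivative_def)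
  moreover have "t \<in> I" "0 \<in> I" by (auto simp: I_def)
  ultimately have "E t = E 0" by metis
  then show ?thesis using \<open>y 0 = 0\<close> by (simp add: E_def)
qed

lemma the_field_n0: "the_field a 0 k z = \<i> * z + a * z ^ (k + 1)"
  by (simp add: the_field_def)

text \<open>Along a solution of \<open>z' = iz + a z\<^bsup>k+1\<^esup>\<close>, \<open>w = z\<^bsup>-k\<^esup>\<close> solves the linear equation
  \<open>w' = -ik(w - ia)\<close>, so \<open>w(t) = ia + c e\<^bsup>-ikt\<^esup>\<close> with \<open>c = bernoulli_const a k (z 0)\<close>.\<close>
definition bernoulli_const :: "complex \<Rightarrow> nat \<Rightarrow> complex \<Rightarrow> complex" where
  "bernoulli_const a k p = inverse (p ^ k) - \<i> * a"

text \<open>The closed form of \<open>w\<close>, multiplied out so that no division by \<open>z(t)\<close> occurs.\<close>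
lemma bernoulli_identity:
  assumes "k \<ge> 1" and x: "is_solution (the_field a 0 k) x" and "x 0 \<noteq> 0"
  shows "x t ^ k * (bernoulli_const a k (x 0) + \<i> * a * exp (\<i> * of_nat k * of_real t))
           = exp (\<i> * of_nat k * of_real t)"
proof -
  define c where "c = bernoulli_const a k (x 0)"
  define E where "E t = exp (\<i> * of_nat k * of_real t)" for t
  define D where "D t = x t ^ k * (c + \<i> * a * E t) - E t" for t
  have "D t = 0"
  proof (rule homogeneous_linear_ode_zero)
    show "continuous_on UNIV (\<lambda>t. of_nat k * (\<i> + a * x t ^ k))"
      using solution_continuous[OF x] by (intro continuous_intros)
    show "D 0 = 0"
      using \<open>x 0 \<noteq> 0\<close> by (simp add: D_def E_def c_def bernoulli_const_def)
    fix t
    have x': "(x has_vector_derivative \<i> * x t + a * x t ^ (k + 1)) (at t)"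
      using x unfolding is_solution_def the_field_n0 by blast
    have "((\<lambda>z. z ^ k) \<circ> x has_vector_derivative
        (\<i> * x t + a * x t ^ (k + 1)) * (of_nat k * x t ^ (k - 1))) (at t)"
      by (rule field_vector_diff_chain_at[OF x']) (auto intro!: derivative_eq_intros)
    then have "((\<lambda>t. x t ^ k) has_vector_derivative of_nat k * x t ^ k * (\<i> + a * x t ^ k)) (at t)"
      unfolding o_def by (rule has_vector_derivative_eq_rhs)
        (use \<open>k \<ge> 1\<close> in \<open>cases k, simp_all add: algebra_simps power_add[symmetric]\<close>)
    moreover have "(E has_vector_derivative \<i> * of_nat k * E t) (at t)"
      unfolding E_def by (rule has_vector_derivative_exp_scaled)
    ultimately have "(D has_vector_derivative
        of_nat k * x t ^ k * (\<i> + a * x t ^ k) * (c + \<i> * a * E t)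
        + x t ^ k * (\<i> * a * (\<i> * of_nat k * E t)) - \<i> * of_nat k * E t) (at t)"
      unfolding D_def by (auto intro!: derivative_eq_intros)
    then show "(D has_vector_derivative of_nat k * (\<i> + a * x t ^ k) * D t) (at t)"
      by (simp add: D_def algebra_simps)
  qed
  then show ?thesis by (simp add: D_def E_def c_def)
qed

text \<open>Otherwise \<open>c + ia e\<^bsup>ikt\<^esup>\<close> vanishes at some time, contradicting the Bernoulli identity.\<close>
lemma norm_bernoulli_const_neq:
  assumes "k \<ge> 1" and x: "is_solution (the_field a 0 k) x" and "x 0 \<noteq> 0"
  shows "cmod (bernoulli_const a k (x 0)) \<noteq> cmod a"
proof
  define c where "c = bernoulli_const a k (x 0)"
  assume "cmod c = cmod a"
  obtain u where "cmod u = 1" and u: "c + \<i> * a * u = 0"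
  proof (cases "a = 0")
    case True
    with \<open>cmod c = cmod a\<close> show ?thesis by (intro that[of 1]) auto
  next
    case False
    with \<open>cmod c = cmod a\<close> show ?thesis
      by (intro that[of "\<i> * c / a"]) (auto simp: norm_divide norm_mult)
  qed
  define t where "t = Arg u / k"
  have "exp (\<i> * of_nat k * of_real t) = u"
    using \<open>k \<ge> 1\<close> \<open>cmod u = 1\<close> cis_Arg[of u] norm_eq_zero[of u]
    by (auto simp: t_def cis_conv_exp sgn_div_norm field_simps)
  then show False
    using bernoulli_identity[OF assms, of t] u \<open>cmod u = 1\<close> by (auto simp: c_def)
qed

definition orbit_base :: "complex \<Rightarrow> nat \<Rightarrow> complex \<Rightarrow> complex \<Rightarrow> complex" where
  "orbit_base a k p s = 1 + \<i> * a / bernoulli_const a k p * exp (\<i> * of_nat k * s)"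

definition orbit_phase :: "complex \<Rightarrow> nat \<Rightarrow> complex \<Rightarrow> complex \<Rightarrow> complex" where
  "orbit_phase a k p s = \<i> * s - Ln (orbit_base a k p s) / of_nat k"

text \<open>For \<open>|c| > |a|\<close> the base stays in the right half-plane at real times, so the principal
  logarithm gives a global branch of \<open>e\<^bsup>it\<^esup> (c + ia e\<^bsup>ikt\<^esup>)\<^bsup>-1/k\<^esup>\<close>, normalised to start at \<open>p\<close>.\<close>
definition explicit_orbit :: "complex \<Rightarrow> nat \<Rightarrow> complex \<Rightarrow> real \<Rightarrow> complex" where
  "explicit_orbit a k p t = p * exp (orbit_phase a k p (of_real t) - orbit_phase a k p 0)"

lemma orbit_base_not_nonpos_Reals:
  assumes "cmod (bernoulli_const a k p) > cmod a"
  shows "orbit_base a k p (of_real t) \<notin> \<real>\<^sub>\<le>\<^sub>0" and "orbit_base a k p (of_real t) \<noteq> 0"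
proof -
  define z where "z = \<i> * a / bernoulli_const a k p * exp (\<i> * of_nat k * of_real t)"
  have "cmod z < 1"
    using assms by (auto simp: z_def norm_mult norm_divide norm_exp_eq_Re divide_less_eq_1)
  moreover have "orbit_base a k p (of_real t) = 1 + z" by (simp add: orbit_base_def z_def)
  ultimately have "Re (orbit_base a k p (of_real t)) > 0"
    using abs_Re_le_cmod[of z] by simp
  then show "orbit_base a k p (of_real t) \<notin> \<real>\<^sub>\<le>\<^sub>0" and "orbit_base a k p (of_real t) \<noteq> 0"
    by (auto simp: complex_nonpos_Reals_iff)
qed

lemma explicit_orbit_bernoulli_identity:
  assumes "k \<ge> 1" "p \<noteq> 0" and "cmod (bernoulli_const a k p) > cmod a"
  shows "explicit_orbit a k p t ^ k * (bernoulli_const a k p + \<i> * a * exp (\<i> * of_nat k * of_real t))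
           = exp (\<i> * of_nat k * of_real t)"
proof -
  define c where "c = bernoulli_const a k p"
  define E where "E s = exp (\<i> * of_nat k * s)" for s
  define W where "W = orbit_base a k p"
  have "c \<noteq> 0" using assms(3) by (auto simp: c_def)
  have W0: "W (of_real s) \<noteq> 0" for s
    using orbit_base_not_nonpos_Reals(2)[OF assms(3)] by (simp add: W_def)
  have phase: "exp (of_nat k * orbit_phase a k p (of_real s)) = E (of_real s) / W (of_real s)" for s
  proof -
    have "of_nat k * orbit_phase a k p (of_real s) = \<i> * of_nat k * of_real s - Ln (W (of_real s))"
      using assms(1) by (simp add: orbit_phase_def W_def algebra_simps)
    then show ?thesis using W0[of s] by (simp add: E_def exp_diff)
  qed
  have "explicit_orbit a k p t ^ k
      = p ^ k * exp (of_nat k * orbit_phase a k p (of_real t)) / exp (of_nat k * orbit_phase a k p (of_real 0))"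
    by (simp add: explicit_orbit_def power_mult_distrib power_divide exp_of_nat_mult exp_diff)
  also have "\<dots> = E (of_real t) / (c * W (of_real t))"
  proof -
    have "p ^ k * W 0 = 1 / c"
      using assms(2) \<open>c \<noteq> 0\<close> by (simp add: W_def orbit_base_def c_def bernoulli_const_def field_simps)
    then show ?thesis
      using W0[of 0] W0[of t] \<open>c \<noteq> 0\<close> unfolding phase by (simp add: E_def field_simps)
  qed
  moreover have "c * W (of_real t) = c + \<i> * a * E (of_real t)"
    using \<open>c \<noteq> 0\<close> by (simp add: W_def orbit_base_def c_def E_def field_simps)
  moreover have "c * W (of_real t) \<noteq> 0" using W0[of t] \<open>c \<noteq> 0\<close> by simp
  ultimately show ?thesis by (simp add: c_def[symmetric] E_def)
qed

lemma has_field_derivative_orbit_phase: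
  fixes t :: real
  assumes "k \<ge> 1" and "cmod (bernoulli_const a k p) > cmod a"
  defines "E \<equiv> exp (\<i> * of_nat k * of_real t)" and "W \<equiv> orbit_base a k p (of_real t)"
  shows "(orbit_phase a k p has_field_derivative \<i> + a * E / (bernoulli_const a k p * W)) (at (of_real t))"
proof -
  define c where "c = bernoulli_const a k p"
  have "c \<noteq> 0" using assms(2) by (auto simp: c_def)
  have W: "W \<notin> \<real>\<^sub>\<le>\<^sub>0" "W \<noteq> 0"
    using orbit_base_not_nonpos_Reals[OF assms(2)] by (auto simp: W_def)
  have "(orbit_base a k p has_field_derivative \<i> * a / c * (\<i> * of_nat k * E)) (at (of_real t))"
    unfolding orbit_base_def c_def[symmetric] E_def using \<open>c \<noteq> 0\<close> by (auto intro!: derivative_eq_intros)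
  from DERIV_chain2[OF has_field_derivative_Ln[OF W(1)[unfolded W_def]] this]
  have "((\<lambda>s. Ln (orbit_base a k p s)) has_field_derivative
      inverse W * (\<i> * a / c * (\<i> * of_nat k * E))) (at (of_real t))"
    by (simp add: W_def)
  then have "(orbit_phase a k p has_field_derivative
      \<i> * 1 - inverse W * (\<i> * a / c * (\<i> * of_nat k * E)) / of_nat k) (at (of_real t))"
    unfolding orbit_phase_def by (rule DERIV_diff[OF DERIV_cmult[OF DERIV_ident] DERIV_cdivide])
  then show ?thesis
    by (rule DERIV_cong) (use assms(1) W(2) \<open>c \<noteq> 0\<close> in \<open>simp add: c_def field_simps\<close>)
qed

lemma explicit_orbit_2pi_periodic: "explicit_orbit a k p (t + 2 * pi) = explicit_orbit a k p t"
proof -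
  have "\<i> * of_nat k * of_real (t + 2 * pi) = \<i> * of_nat k * of_real t + of_nat k * (2 * of_real pi * \<i>)"
    by (simp add: algebra_simps)
  then have "exp (\<i> * of_nat k * of_real (t + 2 * pi)) = exp (\<i> * of_nat k * of_real t)"
    by (simp add: exp_add exp_of_nat_mult)
  then have "orbit_phase a k p (of_real (t + 2 * pi)) - orbit_phase a k p 0
      = (orbit_phase a k p (of_real t) - orbit_phase a k p 0) + 2 * of_real pi * \<i>"
    by (simp add: orbit_phase_def orbit_base_def algebra_simps)
  then show ?thesis by (simp only: explicit_orbit_def exp_add exp_two_pi_i mult_1_right)
qed

lemma explicit_orbit_solution:
  assumes "k \<ge> 1" "p \<noteq> 0" and "cmod (bernoulli_const a k p) > cmod a"
  shows "is_solution (the_field a 0 k) (explicit_orbit a k p)" and "explicit_orbit a k p 0 = p"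
proof -
  define c where "c = bernoulli_const a k p"
  define X where "X = explicit_orbit a k p"
  have "c \<noteq> 0" using assms(3) by (auto simp: c_def)
  show "is_solution (the_field a 0 k) X"
    unfolding is_solution_def
  proof
    fix t
    define E where "E = exp (\<i> * of_nat k * of_real t)"
    define W where "W = orbit_base a k p (of_real t)"
    have "W \<noteq> 0"
      using orbit_base_not_nonpos_Reals(2)[OF assms(3)] by (simp add: W_def)
    have "((\<lambda>s. p * exp (orbit_phase a k p s - orbit_phase a k p 0)) has_field_derivative
        p * exp (orbit_phase a k p (of_real t) - orbit_phase a k p 0) * (\<i> + a * E / (c * W)))
        (at (of_real t))"
      using has_field_derivative_orbit_phase[OF assms(1,3), of t]
      by (auto intro!: derivative_eq_intros simp: c_def E_def W_def)
    then have "(X has_vector_derivative X t * (\<i> + a * E / (c * W))) (at t)"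
      unfolding X_def explicit_orbit_def by (rule has_vector_derivative_real_field)
    moreover have "X t ^ k = E / (c * W)"
    proof -
      have "c * W = c + \<i> * a * E"
        using \<open>c \<noteq> 0\<close> by (simp add: W_def orbit_base_def E_def c_def[symmetric] field_simps)
      moreover have "c * W \<noteq> 0" using \<open>W \<noteq> 0\<close> \<open>c \<noteq> 0\<close> by simp
      ultimately show ?thesis
        using explicit_orbit_bernoulli_identity[OF assms, of t]
        by (simp add: X_def c_def[symmetric] E_def[symmetric] eq_divide_eq)
    qed
    ultimately show "(X has_vector_derivative the_field a 0 k (X t)) (at t)"
      by (simp add: the_field_n0 algebra_simps)
  qed
  show "explicit_orbit a k p 0 = p" by (simp add: explicit_orbit_def)
qed

text \<open>Both solutions satisfy the Bernoulli identity, so their quotient is a continuous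
  function with values among the \<open>k\<close>-th roots of unity, hence constant.\<close>
lemma solution_eq_explicit_orbit:
  assumes "k \<ge> 1" and x: "is_solution (the_field a 0 k) x" and "x 0 = p" "p \<noteq> 0"
    and "cmod (bernoulli_const a k p) > cmod a"
  shows "x t = explicit_orbit a k p t"
proof -
  define X where "X = explicit_orbit a k p"
  define q where "q t = x t / X t" for t
  have "X t \<noteq> 0" for t using \<open>p \<noteq> 0\<close> by (simp add: X_def explicit_orbit_def)
  have "q s ^ k = 1" for s
  proof -
    define E where "E = exp (\<i> * of_nat k * of_real s)"
    define C where "C = bernoulli_const a k p + \<i> * a * E"
    have "cmod (\<i> * a * E) < cmod (bernoulli_const a k p)"
      using assms(5) by (simp add: E_def norm_mult norm_exp_eq_Re)
    then have "C \<noteq> 0" by (auto simp: C_def add_eq_0_iff2)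
    have "x s ^ k * C = E"
      using bernoulli_identity[OF assms(1,2), of s] assms(3,4) by (simp add: C_def E_def)
    moreover have "X s ^ k * C = E"
      using explicit_orbit_bernoulli_identity[OF assms(1,4,5), of s] by (simp add: X_def C_def E_def)
    ultimately have "x s ^ k * C = X s ^ k * C" by simp
    then have "x s ^ k = X s ^ k" using \<open>C \<noteq> 0\<close> by simp
    then show ?thesis using \<open>X s \<noteq> 0\<close> by (simp add: q_def power_divide)
  qed
  have "continuous_on UNIV q"
    unfolding q_def X_def
    by (rule continuous_on_divide[OF solution_continuous[OF x]
          solution_continuous[OF explicit_orbit_solution(1)[OF assms(1,4,5)]]])
      (use \<open>\<And>t. X t \<noteq> 0\<close> in \<open>simp add: X_def\<close>)
  moreover have "range q \<subseteq> {z. z ^ k = 1}"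
    using \<open>\<And>s. q s ^ k = 1\<close> by auto
  then have "finite (range q)"
    by (rule finite_subset) (use finite_nth_roots assms(1) in simp)
  ultimately have "q constant_on UNIV"
    by (intro continuous_finite_range_constant connected_UNIV)
  then have "q t = q 0" unfolding constant_on_def by (metis UNIV_I)
  then show ?thesis
    using \<open>X t \<noteq> 0\<close> \<open>x 0 = p\<close> explicit_orbit_solution(2)[OF assms(1,4,5)] \<open>p \<noteq> 0\<close>
    by (simp add: q_def X_def)
qed

lemma explicit_orbit_return:
  assumes "k \<ge> 1" "p \<noteq> 0" and "cmod (bernoulli_const a k p) > cmod a"
    and "explicit_orbit a k p T = p"
  shows "exp (\<i> * of_real T) = 1"
proof -
  define c where "c = bernoulli_const a k p"
  define E where "E = exp (\<i> * of_nat k * of_real T)"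
  have "c \<noteq> 0" using assms(3) by (auto simp: c_def)
  define P where "P = p ^ k"
  have "P * (c + \<i> * a * E) = E"
    using explicit_orbit_bernoulli_identity[OF assms(1-3), of T] assms(4) by (simp add: P_def c_def E_def)
  moreover have "P * (c + \<i> * a) = 1"
    using assms(2) by (simp add: P_def c_def bernoulli_const_def right_diff_distrib)
  moreover have "P * c * (1 - E) = (P * (c + \<i> * a * E) - E) - E * (P * (c + \<i> * a) - 1)"
    by (simp add: algebra_simps)
  ultimately have "P * c * (1 - E) = 0" by simp
  then have "E = 1" using \<open>c \<noteq> 0\<close> assms(2) by (simp add: P_def)
  then have "orbit_phase a k p (of_real T) = \<i> * of_real T + orbit_phase a k p 0"
    by (simp add: orbit_phase_def orbit_base_def E_def)
  then show ?thesis
    using assms(2,4) by (simp add: explicit_orbit_def)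
qed

lemma periodic_point_n0:
  assumes "k \<ge> 1" "p \<noteq> 0" and "cmod (bernoulli_const a k p) > cmod a"
  shows "periodic_point (the_field a 0 k) p" and "min_period (the_field a 0 k) p = 2 * pi"
proof -
  have period: "is_period (the_field a 0 k) p (2 * pi)"
    unfolding is_period_def
    by (intro conjI exI[of _ "explicit_orbit a k p"])
      (use explicit_orbit_solution[OF assms] explicit_orbit_2pi_periodic in auto)
  have "p ^ (k + 1) * inverse (p ^ k) = p" using assms(2) by simp
  then have "the_field a 0 k p = \<i> * p ^ (k + 1) * bernoulli_const a k p"
    by (simp add: the_field_n0 bernoulli_const_def algebra_simps)
  moreover have "bernoulli_const a k p \<noteq> 0" using assms(3) by auto
  ultimately show "periodic_point (the_field a 0 k) p"
    unfolding periodic_point_def using period assms(2) by auto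
  have "2 * pi \<le> T" if T: "is_period (the_field a 0 k) p T" for T
  proof -
    obtain x where x: "is_solution (the_field a 0 k) x" "x 0 = p" and "x (0 + T) = x 0" "T > 0"
      using T unfolding is_period_def by blast
    then have "explicit_orbit a k p T = p"
      using solution_eq_explicit_orbit[OF assms(1) x assms(2,3)] by simp
    then have "exp (\<i> * of_real T) = 1" by (rule explicit_orbit_return[OF assms])
    then obtain m :: int where m: "T = of_int (2 * m) * pi" by (auto simp: exp_eq_1)
    with \<open>T > 0\<close> have "m > 0" by (simp add: zero_less_mult_iff)
    with m show ?thesis by simp
  qed
  then show "min_period (the_field a 0 k) p = 2 * pi"
    by (rule min_period_eqI[OF period])
qed

text \<open>\<open>|z|\<^sup>k (|c| - |a|)\<close> for \<open>c = bernoulli_const a k z\<close>, continued continuously to \<open>z = 0\<close>.\<close>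
definition bernoulli_margin :: "complex \<Rightarrow> nat \<Rightarrow> complex \<Rightarrow> real" where
  "bernoulli_margin a k z = cmod (1 - \<i> * a * z ^ k) - cmod a * cmod z ^ k"

lemma continuous_on_bernoulli_margin: "continuous_on UNIV (bernoulli_margin a k)"
  unfolding bernoulli_margin_def by (intro continuous_intros)

lemma bernoulli_margin_zero: "k \<ge> 1 \<Longrightarrow> bernoulli_margin a k 0 = 1"
  by (simp add: bernoulli_margin_def power_0_left)

lemma bernoulli_margin_eq:
  assumes "z \<noteq> 0"
  shows "bernoulli_margin a k z = cmod z ^ k * (cmod (bernoulli_const a k z) - cmod a)"
proof -
  have "1 - \<i> * a * z ^ k = z ^ k * bernoulli_const a k z"
    using assms by (simp add: bernoulli_const_def right_diff_distrib)
  then show ?thesis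
    by (simp add: bernoulli_margin_def norm_mult norm_power right_diff_distrib)
qed

lemma bernoulli_margin_pos_iff:
  "z \<noteq> 0 \<Longrightarrow> bernoulli_margin a k z > 0 \<longleftrightarrow> cmod (bernoulli_const a k z) > cmod a"
  by (simp add: bernoulli_margin_eq zero_less_mult_iff)

lemma bernoulli_const_gt_period_annulus:
  assumes "k \<ge> 1" and "p \<in> period_annulus (the_field a 0 k) 0"
  shows "cmod (bernoulli_const a k p) > cmod a"
proof -
  have "bernoulli_margin a k p > 0"
  proof (rule period_annulus_positive[OF continuous_on_bernoulli_margin _ _ assms(2)])
    show "bernoulli_margin a k 0 > 0" using bernoulli_margin_zero[OF assms(1)] by simp
    fix q assume "q \<noteq> 0" "periodic_point (the_field a 0 k) q"
    then obtain x where "is_solution (the_field a 0 k) x" "x 0 = q"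
      unfolding periodic_point_def is_period_def by blast
    then have "cmod (bernoulli_const a k q) \<noteq> cmod a"
      using norm_bernoulli_const_neq[OF assms(1)] \<open>q \<noteq> 0\<close> by blast
    then show "bernoulli_margin a k q \<noteq> 0"
      using \<open>q \<noteq> 0\<close> by (simp add: bernoulli_margin_eq)
  qed
  then show ?thesis
    using bernoulli_margin_pos_iff[of p] period_annulus_neq_center[OF assms(2)] by blast
qed

lemma center_n0:
  assumes "k \<ge> 1"
  shows "center (the_field a 0 k) 0"
proof -
  have "open {z. bernoulli_margin a k z > 0}"
    by (rule open_Collect_less[OF continuous_on_const continuous_on_bernoulli_margin])
  moreover have "0 \<in> {z. bernoulli_margin a k z > 0}"
    using bernoulli_margin_zero[OF assms] by simp
  ultimately obtain r where "r > 0" and r: "ball 0 r \<subseteq> {z. bernoulli_margin a k z > 0}"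
    using open_contains_ball by blast
  have "periodic_point (the_field a 0 k) p" if "p \<in> ball 0 r - {0}" for p
    using that r bernoulli_margin_pos_iff[of p] periodic_point_n0(1)[OF assms, of p] by blast
  moreover have "the_field a 0 k 0 = 0" by (simp add: the_field_n0)
  ultimately show ?thesis
    unfolding center_def using \<open>r > 0\<close> by blast
qed

theorem isochronous_center_n0:
  assumes "k \<ge> 1"
  shows "isochronous_center (the_field a 0 k) 0"
  unfolding isochronous_center_def
proof (intro conjI exI ballI)
  show "center (the_field a 0 k) 0" by (rule center_n0[OF assms])
  fix p assume "p \<in> period_annulus (the_field a 0 k) 0"
  then show "min_period (the_field a 0 k) p = 2 * pi"
    using periodic_point_n0(2)[OF assms] bernoulli_const_gt_period_annulus[OF assms]
      period_annulus_neq_center by blast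
qed

theorem proposition4p1:
  fixes a :: complex and n k :: nat
  assumes "a \<noteq> 0"
  shows
    "(n = 0 \<and> k \<ge> 1 \<longrightarrow> isochronous_center (the_field a n k) 0)
   \<and> (k = 0 \<and> n \<ge> 1 \<longrightarrow>
       (center (the_field a n k) 0 \<longleftrightarrow> Re a = 0)
     \<and> (\<forall>\<alpha>::real. \<alpha> \<noteq> 0 \<and> a = \<alpha> * \<i> \<longrightarrow>
          first_integral (the_field a n k) (\<lambda>z. z * cnj z)
        \<and> (\<forall>p \<in> period_annulus (the_field a n k) 0.
             min_period (the_field a n k) p = 2 * pi / (1 + \<alpha> * (cmod p ^ 2) ^ n))
        \<and> (\<alpha> > 0 \<longrightarrow>
             global_center (the_field a n k) 0
           \<and> (\<forall>p \<in> period_annulus (the_field a n k) 0. \<forall>q \<in> period_annulus (the_field a n k) 0.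
                cmod p < cmod q \<longrightarrow> min_period (the_field a n k) q < min_period (the_field a n k) p)
           \<and> ((min_period (the_field a n k)) \<longlongrightarrow> 0) at_infinity)
        \<and> (\<alpha> < 0 \<longrightarrow>
             period_annulus (the_field a n k) 0 = {z. 0 < cmod z ^ 2 \<and> cmod z ^ 2 < (-1/\<alpha>) powr (1/n)}
           \<and> (\<forall>z. cmod z ^ 2 = (-1/\<alpha>) powr (1/n) \<longrightarrow> the_field a n k z = 0)
           \<and> (\<forall>p \<in> period_annulus (the_field a n k) 0. \<forall>q \<in> period_annulus (the_field a n k) 0.
                cmod p < cmod q \<longrightarrow> min_period (the_field a n k) p < min_period (the_field a n k) q)
           \<and> (\<forall>b. cmod b ^ 2 = (-1/\<alpha>) powr (1/n) \<longrightarrow>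
                filterlim (min_period (the_field a n k)) at_top
                  (at b within period_annulus (the_field a n k) 0)))))"
proof (intro conjI impI, goal_cases)
  case 1
  then show ?case using isochronous_center_n0 by auto
next
  case 2
  then show ?case using center_k0_iff by auto
next
  case 3
  show ?case
  proof (intro allI impI, goal_cases)
    case (1 \<alpha>)
    with 3 have F: "the_field a n k = rotation_field (angular_speed \<alpha> n)" and "n \<ge> 1"
      by (auto simp: the_field_imaginary_eq_rotation_field)
    have common: "first_integral (the_field a n k) (\<lambda>z. z * cnj z)"
      "\<forall>p \<in> period_annulus (the_field a n k) 0.
         min_period (the_field a n k) p = 2 * pi / (1 + \<alpha> * (cmod p ^ 2) ^ n)"
      unfolding F using first_integral_rotation_field min_period_angular_speed[OF \<open>n \<ge> 1\<close>] by auto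
    show ?case
    proof (cases "\<alpha> > 0")
      case True
      then show ?thesis
        using common period_function_angular_speed_pos[OF True \<open>n \<ge> 1\<close>] unfolding F by auto
    next
      case False
      with 1 have "\<alpha> < 0" by auto
      then show ?thesis
        using False common period_function_angular_speed_neg[OF \<open>\<alpha> < 0\<close> \<open>n \<ge> 1\<close>] unfolding F by blast
    qed
  qed
qed

end
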